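(* For every $\theta^{\max}\in(0,\pi]$ and every real $\theta<\theta^{\max}$, $$\sin\theta\ge \theta+\left(\frac{\sin\theta^{\max}-\theta^{\max}}{(\theta^{\max})^2}\right)\theta^2,$$ and for every $\theta^{\min}\in[-\pi,0)$ and every real $\theta>\theta^{\min}$, $$\sin\theta\le \theta+\left(\frac{\sin\theta^{\min}-\theta^{\min}}{(\theta^{\min})^2}\right)\theta^2.$$ Moreover, for all real $\theta$, $1-\tfrac12\theta^2\le\cos\theta\le 1$. *)

theory Defs
  imports Complex_Main
begin

end

theory Submission
  imports Defs
begin

text \<open>The coefficient \<open>g x = (sin x - x) / x\<^sup>2\<close> is non-increasing on \<open>(0, pi]\<close>: the numerator
  of \<open>g'\<close> is \<open>x (x (1 + cos x) - 2 sin x)\<close>, and by the half-angle formulas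
  \<open>x (1 + cos x) - 2 sin x = 4 cos (x/2) ((x/2) cos (x/2) - sin (x/2)) \<le> 0\<close>.
  Hence for \<open>0 < t < tmax\<close> we get \<open>sin t - t = g t * t\<^sup>2 \<ge> g tmax * t\<^sup>2\<close>; for \<open>t \<le> 0\<close> the bound
  follows from \<open>sin t \<ge> t\<close> and \<open>g tmax \<le> 0\<close>. The bound for \<open>tmin < 0\<close> is its mirror image
  under the oddness of \<open>sin\<close>, and the cosine bound is \<open>cos t = 1 - 2 (sin (t/2))\<^sup>2\<close>.\<close>

lemma x_mult_cos_le_sin:
  fixes x :: real
  assumes "0 \<le> x" "x \<le> pi"
  shows "x * cos x \<le> sin x"
proof -
  let ?k = "\<lambda>x. sin x - x * cos x"
  have "?k 0 \<le> ?k x"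
  proof (rule DERIV_nonneg_imp_nondecreasing[OF assms(1)])
    fix y assume y: "0 \<le> y" "y \<le> x"
    have "(?k has_real_derivative y * sin y) (at y)"
      by (auto intro!: derivative_eq_intros simp: algebra_simps)
    moreover have "y * sin y \<ge> 0"
      using y assms by (intro mult_nonneg_nonneg sin_ge_zero) auto
    ultimately show "\<exists>d. (?k has_real_derivative d) (at y) \<and> d \<ge> 0" by blast
  qed
  then show ?thesis by simp
qed

lemma x_mult_one_plus_cos_le_two_sin:
  fixes x :: real
  assumes "0 \<le> x" "x \<le> pi"
  shows "x * (1 + cos x) \<le> 2 * sin x"
proof -
  define y where "y = x / 2"
  have x_eq: "x = 2 * y" by (simp add: y_def)
  have "x * (1 + cos x) - 2 * sin x = 4 * cos y * (y * cos y - sin y)"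
    unfolding x_eq cos_double_cos sin_double by (simp add: power2_eq_square algebra_simps)
  moreover have "cos y \<ge> 0" using assms by (intro cos_ge_zero) (auto simp: y_def)
  moreover have "y * cos y \<le> sin y" using assms by (intro x_mult_cos_le_sin) (auto simp: y_def)
  ultimately have "x * (1 + cos x) - 2 * sin x \<le> 0" by (simp add: mult_nonneg_nonpos)
  then show ?thesis by simp
qed

lemma sin_minus_id_div_square_antimono:
  fixes s t :: real
  assumes "0 < s" "s \<le> t" "t \<le> pi"
  shows "(sin t - t) / t\<^sup>2 \<le> (sin s - s) / s\<^sup>2"
proof (rule DERIV_nonpos_imp_nonincreasing[OF assms(2)])
  fix x assume x: "s \<le> x" "x \<le> t"
  then have "x > 0" using assms by auto
  define d where "d = x * (x * (1 + cos x) - 2 * sin x) / (x\<^sup>2)\<^sup>2"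
  have "((\<lambda>x. (sin x - x) / x\<^sup>2) has_real_derivative d) (at x)"
    using \<open>x > 0\<close> unfolding d_def
    by (auto intro!: derivative_eq_intros simp: power2_eq_square algebra_simps)
  moreover have "x * (1 + cos x) \<le> 2 * sin x"
    using x assms by (intro x_mult_one_plus_cos_le_two_sin) auto
  then have "d \<le> 0"
    using \<open>x > 0\<close> unfolding d_def by (intro divide_nonpos_nonneg mult_nonneg_nonpos) auto
  ultimately show "\<exists>d. ((\<lambda>x. (sin x - x) / x\<^sup>2) has_real_derivative d) (at x) \<and> d \<le> 0"
    by blast
qed

lemma sin_ge_quadratic_bound:
  fixes tmax t :: real
  assumes "0 < tmax" "tmax \<le> pi" "t < tmax"
  shows "t + ((sin tmax - tmax) / tmax\<^sup>2) * t\<^sup>2 \<le> sin t"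
proof (cases "t \<le> 0")
  case True
  have "sin (-t) \<le> -t" using True by (intro sin_x_le_x) auto
  moreover have "sin tmax \<le> tmax" using assms by (intro sin_x_le_x) auto
  then have "((sin tmax - tmax) / tmax\<^sup>2) * t\<^sup>2 \<le> 0"
    by (intro mult_nonpos_nonneg divide_nonpos_nonneg) auto
  ultimately show ?thesis by simp
next
  case False
  have "((sin tmax - tmax) / tmax\<^sup>2) * t\<^sup>2 \<le> (sin t - t) / t\<^sup>2 * t\<^sup>2"
    using False assms by (intro mult_right_mono sin_minus_id_div_square_antimono) auto
  also have "\<dots> = sin t - t" using False by simp
  finally show ?thesis by simp
qed

lemma sin_le_quadratic_bound:
  fixes tmin t :: real
  assumes "-pi \<le> tmin" "tmin < 0" "tmin < t"
  shows "sin t \<le> t + ((sin tmin - tmin) / tmin\<^sup>2) * t\<^sup>2"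
proof -
  have "-t + ((sin (-tmin) - (-tmin)) / (-tmin)\<^sup>2) * (-t)\<^sup>2 \<le> sin (-t)"
    using assms by (intro sin_ge_quadratic_bound) auto
  moreover have "(sin (-tmin) - (-tmin)) / (-tmin)\<^sup>2 = - ((sin tmin - tmin) / tmin\<^sup>2)"
    by (simp add: minus_divide_left)
  ultimately show ?thesis by (simp only: power2_minus sin_minus)
qed

lemma cos_ge_one_minus_square_half:
  fixes t :: real
  shows "1 - t\<^sup>2 / 2 \<le> cos t"
proof -
  have "\<bar>sin (t/2)\<bar> \<le> \<bar>t/2\<bar>" by (rule abs_sin_x_le_abs_x)
  then have "(sin (t/2))\<^sup>2 \<le> (t/2)\<^sup>2" by (metis abs_le_square_iff)
  moreover have "cos t = 1 - 2 * (sin (t/2))\<^sup>2" using cos_double_sin[of "t/2"] by simp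
  ultimately show ?thesis by (simp add: power2_eq_square)
qed

theorem corollary3:
  shows "(\<forall>tmax::real. \<forall>t::real. 0 < tmax \<and> tmax \<le> pi \<and> t < tmax \<longrightarrow>
            sin t \<ge> t + ((sin tmax - tmax) / tmax\<^sup>2) * t\<^sup>2)
       \<and> (\<forall>tmin::real. \<forall>t::real. -pi \<le> tmin \<and> tmin < 0 \<and> t > tmin \<longrightarrow>
            sin t \<le> t + ((sin tmin - tmin) / tmin\<^sup>2) * t\<^sup>2)
       \<and> (\<forall>t::real. 1 - t\<^sup>2 / 2 \<le> cos t \<and> cos t \<le> 1)"
  using sin_ge_quadratic_bound sin_le_quadratic_bound cos_ge_one_minus_square_half by auto

end
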